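(* Let $\mathcal H$ be a complex Hilbert space of finite dimension $d$, let $A,B$ be Hermitian operators on $\mathcal H$, let $|\psi\rangle,|\phi\rangle$ be unit vectors, and let $\{|\phi\rangle,|\phi^\perp_1\rangle,\dots,|\phi^\perp_{d-1}\rangle\}$ be an orthonormal basis of $\mathcal H$. Assume $a:=\langle\Delta A\rangle^{\phi}_{\psi}\neq0$ and $b:=\langle\Delta B\rangle^{\phi}_{\psi}\neq 0$. For each choice of sign, set $$S_{\pm}=\sum_{k=1}^{d-1}\Big|\langle\psi|\big(\tfrac{A}{a}\pm i\tfrac{B}{b}\big)|\phi^\perp_k\rangle\Big|^2 .$$ Then, for each choice of sign, $$a\,b\,\Big(1-\tfrac12 S_{\pm}\Big)=\mp\Big(\tfrac{1}{2i}\langle\psi|[A,B]|\psi\rangle-\operatorname{Im}W_{AB}\Big),$$ so that, whenever $1-\tfrac12S_\pm\neq0$, $$\langle\Delta A\rangle^{\phi}_{\psi}\langle\Delta B\rangle^{\phi}_{\psi}=\frac{\mp\big(\frac{1}{2i}\langle\psi|[A,B]|\psi\rangle-\operatorname{Im}W_{AB}\big)}{1-\frac12 S_{\pm}},$$ where $W_{AB}=\langle\psi|A|\phi\rangle\langle\phi|B|\psi\rangle$.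
   Context: PPS standard deviation: for a Hermitian operator $A$ and unit vectors $|\psi\rangle,|\phi\rangle$, $\langle\Delta A\rangle^{\phi}_{\psi}:=\sqrt{\langle\psi|A^2|\psi\rangle-|\langle\phi|A|\psi\rangle|^2}$. $[A,B]=AB-BA$. *)

theory Defs
  imports "HOL-Analysis.Analysis"
begin

text \<open>The finite-dimensional complex Hilbert space is modelled as complex^'n
  (dimension d = CARD('n)), operators as complex matrices complex^'n^'n.\<close>

definition cinner :: "complex ^ 'n \<Rightarrow> complex ^ 'n \<Rightarrow> complex" where
  "cinner x y = (\<Sum>i\<in>UNIV. cnj (x $ i) * y $ i)"

definition hermitian_mat :: "complex ^ 'n ^ 'n \<Rightarrow> bool" where
  "hermitian_mat A \<longleftrightarrow> (\<forall>i j. A $ i $ j = cnj (A $ j $ i))"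

definition commutator :: "complex ^ 'n ^ 'n \<Rightarrow> complex ^ 'n ^ 'n \<Rightarrow> complex ^ 'n ^ 'n" where
  "commutator A B = A ** B - B ** A"

text \<open>PPS standard deviation: sqrt(<psi|A^2|psi> - |<phi|A|psi>|^2).
  For Hermitian A the quantity <psi|A^2|psi> is real; we take its real part.\<close>
definition pps_sd :: "complex ^ 'n ^ 'n \<Rightarrow> complex ^ 'n \<Rightarrow> complex ^ 'n \<Rightarrow> real" where
  "pps_sd A psi phi =
     sqrt (Re (cinner psi ((A ** A) *v psi)) - (cmod (cinner phi (A *v psi)))\<^sup>2)"

end

theory Submission
  imports Defs
begin

text \<open>Put p = A psi, q = B psi and G(u,v) = <u|v> - <u|phi><phi|v>, the inner product of
  the components orthogonal to phi; completeness of the basis phi, perp 1, ..., perp (d-1)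
  gives G(u,v) = sum_k <u|perp k><perp k|v>. Hermiticity turns a^2 and b^2 into G(p,p) and
  G(q,q), and the k-th summand of S into |<p|perp k>/a + s i <q|perp k>/b|^2; expanding the
  squares, S = 2 + 2 s Im G(p,q) / (a b). Finally Im <p|q> = <psi|[A,B]|psi> / (2 i) and
  <p|phi><phi|q> = W.\<close>

lemma cinner_commute_cnj: "cnj (cinner x y) = cinner y x"
  by (simp add: cinner_def mult.commute)

lemma cinner_diff_right: "cinner x (u - v) = cinner x u - cinner x v"
  by (simp add: cinner_def algebra_simps sum_subtractf)

lemma hermitian_mat_cinner_adjoint:
  assumes "hermitian_mat A"
  shows "cinner x (A *v y) = cinner (A *v x) y"
proof -
  have herm: "cnj (A $ j $ i) = A $ i $ j" for i j
    using assms unfolding hermitian_mat_def by (metis complex_cnj_cnj)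
  have "cinner x (A *v y) = (\<Sum>i\<in>UNIV. \<Sum>j\<in>UNIV. cnj (x $ i) * A $ i $ j * y $ j)"
    by (simp add: cinner_def matrix_vector_mult_def sum_distrib_left mult.assoc)
  also have "\<dots> = (\<Sum>j\<in>UNIV. \<Sum>i\<in>UNIV. cnj (x $ i) * A $ i $ j * y $ j)"
    by (rule sum.swap)
  also have "\<dots> = (\<Sum>j\<in>UNIV. (\<Sum>i\<in>UNIV. cnj (A $ j $ i * x $ i)) * y $ j)"
    by (simp add: sum_distrib_right sum_distrib_left herm mult_ac)
  also have "\<dots> = cinner (A *v x) y"
    by (simp only: cinner_def matrix_vector_mult_def vec_lambda_beta cnj_sum)
  finally show ?thesis .
qed

lemma hermitian_mat_cinner_square:
  assumes "hermitian_mat A"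
  shows "cinner x ((A ** A) *v x) = cinner (A *v x) (A *v x)"
  using hermitian_mat_cinner_adjoint[OF assms] by (simp add: matrix_vector_mul_assoc[symmetric])

lemma cinner_commutator_hermitian:
  assumes "hermitian_mat A" and "hermitian_mat B"
  shows "cinner x (commutator A B *v x) = 2 * \<i> * of_real (Im (cinner (A *v x) (B *v x)))"
proof -
  have "cinner x (commutator A B *v x) = cinner (A *v x) (B *v x) - cinner (B *v x) (A *v x)"
    unfolding commutator_def matrix_vector_mult_diff_rdistrib cinner_diff_right
      matrix_vector_mul_assoc[symmetric]
    by (simp add: hermitian_mat_cinner_adjoint[OF assms(1)] hermitian_mat_cinner_adjoint[OF assms(2)])
  also have "\<dots> = 2 * \<i> * of_real (Im (cinner (A *v x) (B *v x)))"
    unfolding cinner_commute_cnj[of "A *v x" "B *v x", symmetric] complex_diff_cnj by simp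
  finally show ?thesis .
qed

lemma cinner_matrix_lincomb_right:
  "cinner x ((\<chi> i j. A $ i $ j / c + d * B $ i $ j / e) *v v)
     = cinner x (A *v v) / c + d * cinner x (B *v v) / e"
proof -
  have "(\<chi> i j. A $ i $ j / c + d * B $ i $ j / e) *v v = (\<chi> i. (A *v v) $ i / c + d * (B *v v) $ i / e)"
    by (simp add: vec_eq_iff matrix_vector_mult_def sum.distrib sum_divide_distrib sum_distrib_left ring_distribs mult.assoc)
  then show ?thesis
    by (simp add: cinner_def sum.distrib sum_divide_distrib sum_distrib_left ring_distribs mult.left_commute)
qed

text \<open>Orthonormality of CARD('n) vectors says U ** V = mat 1 for the matrix U with these
  rows and its conjugate transpose V; since a one-sided inverse of a square matrix is
  two-sided, V ** U = mat 1 as well, which is the completeness relation.\<close>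
lemma cinner_orthonormal_expansion:
  fixes e :: "nat \<Rightarrow> complex ^ 'n"
  assumes orth: "\<And>j k. j < CARD('n) \<Longrightarrow> k < CARD('n) \<Longrightarrow> cinner (e j) (e k) = (if j = k then 1 else 0)"
  shows "(\<Sum>k<CARD('n). cinner u (e k) * cinner (e k) v) = cinner u v"
proof -
  obtain f :: "'n \<Rightarrow> nat" where f: "bij_betw f UNIV {..<CARD('n)}"
    using ex_bij_betw_finite_nat[of "UNIV :: 'n set"] by (auto simp: lessThan_atLeast0)
  have f_range: "f i < CARD('n)" for i
    using f by (auto simp: bij_betw_def)
  have f_inj: "f i = f i' \<longleftrightarrow> i = i'" for i i'
    using f by (auto simp: bij_betw_def inj_on_def)
  define U :: "complex ^ 'n ^ 'n" where "U = (\<chi> i j. cnj (e (f i) $ j))"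
  define V :: "complex ^ 'n ^ 'n" where "V = (\<chi> i j. e (f j) $ i)"
  have "U ** V = mat 1"
    using orth f_range f_inj
    by (simp add: vec_eq_iff U_def V_def matrix_matrix_mult_def cinner_def mat_def)
  then have "V ** U = mat 1"
    using matrix_left_right_inverse by blast
  then have completeness: "(\<Sum>m\<in>UNIV. e (f m) $ i * cnj (e (f m) $ j)) = (if i = j then 1 else 0)" for i j
    by (simp add: vec_eq_iff U_def V_def matrix_matrix_mult_def mat_def)
  have "(\<Sum>k<CARD('n). cinner u (e k) * cinner (e k) v) = (\<Sum>m\<in>UNIV. cinner u (e (f m)) * cinner (e (f m)) v)"
    using sum.reindex_bij_betw[OF f, of "\<lambda>k. cinner u (e k) * cinner (e k) v"] by simp
  also have "\<dots> = (\<Sum>m\<in>UNIV. \<Sum>i\<in>UNIV. \<Sum>j\<in>UNIV. cnj (u $ i) * v $ j * (e (f m) $ i * cnj (e (f m) $ j)))"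
    by (simp add: cinner_def sum_product algebra_simps) (rule sum.cong[OF refl], rule sum.swap)
  also have "\<dots> = (\<Sum>i\<in>UNIV. \<Sum>j\<in>UNIV. \<Sum>m\<in>UNIV. cnj (u $ i) * v $ j * (e (f m) $ i * cnj (e (f m) $ j)))"
    by (subst sum.swap) (rule sum.cong[OF refl], rule sum.swap)
  also have "\<dots> = (\<Sum>i\<in>UNIV. \<Sum>j\<in>UNIV. cnj (u $ i) * v $ j * (if i = j then 1 else 0))"
    by (simp only: sum_distrib_left[symmetric] completeness)
  also have "\<dots> = (\<Sum>i\<in>UNIV. \<Sum>j\<in>UNIV. if i = j then cnj (u $ i) * v $ j else 0)"
    by (intro sum.cong refl) simp
  also have "\<dots> = cinner u v"
    by (simp add: cinner_def)
  finally show ?thesis .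
qed

lemma cinner_orthogonal_complement_expansion:
  fixes phi u v :: "complex ^ 'n" and perp :: "nat \<Rightarrow> complex ^ 'n"
  assumes phi_unit: "cinner phi phi = 1"
    and perp_unit: "\<forall>k\<in>{1..CARD('n) - 1}. cinner (perp k) (perp k) = 1"
    and perp_phi: "\<forall>k\<in>{1..CARD('n) - 1}. cinner phi (perp k) = 0"
    and perp_orth: "\<forall>j\<in>{1..CARD('n) - 1}. \<forall>k\<in>{1..CARD('n) - 1}. j \<noteq> k \<longrightarrow> cinner (perp j) (perp k) = 0"
  shows "(\<Sum>k=1..CARD('n) - 1. cinner u (perp k) * cinner (perp k) v) = cinner u v - cinner u phi * cinner phi v"
proof -
  define e where "e k = (if k = 0 then phi else perp k)" for k
  have "(\<Sum>k<CARD('n). cinner u (e k) * cinner (e k) v) = cinner u v"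
  proof (rule cinner_orthonormal_expansion)
    fix j k assume "j < CARD('n)" "k < CARD('n)"
    then show "cinner (e j) (e k) = (if j = k then 1 else 0)"
      using phi_unit perp_unit perp_phi perp_orth cinner_commute_cnj[of phi "perp j"]
      by (auto simp: e_def)
  qed
  moreover have "{..<CARD('n)} = insert 0 {1..CARD('n) - 1}"
    using finite_UNIV_card_ge_0[where 'a='n] by auto
  ultimately show ?thesis
    by (simp add: e_def eq_diff_eq add.commute)
qed

lemma sum_cmod_cinner_squared_complement:
  assumes compl: "\<And>u v. (\<Sum>k\<in>K. cinner u (perp k) * cinner (perp k) v) = cinner u v - cinner u phi * cinner phi v"
  shows "(\<Sum>k\<in>K. (cmod (cinner u (perp k)))\<^sup>2) = Re (cinner u u) - (cmod (cinner phi u))\<^sup>2"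
proof -
  have "complex_of_real (\<Sum>k\<in>K. (cmod (cinner u (perp k)))\<^sup>2) = cinner u u - cinner u phi * cinner phi u"
    unfolding of_real_sum complex_norm_square compl[symmetric] by (simp add: cinner_commute_cnj)
  also have "cinner u phi * cinner phi u = complex_of_real ((cmod (cinner phi u))\<^sup>2)"
    by (subst complex_norm_square) (simp add: cinner_commute_cnj mult.commute)
  finally show ?thesis
    by (metis Re_complex_of_real minus_complex.sel(1))
qed

lemma pps_sd_squared:
  assumes "hermitian_mat X"
    and compl: "\<And>u v. (\<Sum>k\<in>K. cinner u (perp k) * cinner (perp k) v) = cinner u v - cinner u phi * cinner phi v"
  shows "(pps_sd X psi phi)\<^sup>2 = (\<Sum>k\<in>K. (cmod (cinner (X *v psi) (perp k)))\<^sup>2)"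
  unfolding pps_sd_def hermitian_mat_cinner_square[OF assms(1)]
    sum_cmod_cinner_squared_complement[OF compl, symmetric]
  by (simp add: sum_nonneg)

lemma cmod_add_imag_squared:
  fixes x y :: complex and a b s :: real
  shows "(cmod (x / of_real a + of_real s * \<i> * y / of_real b))\<^sup>2
    = (cmod x)\<^sup>2 / a\<^sup>2 + s\<^sup>2 * (cmod y)\<^sup>2 / b\<^sup>2 + 2 * s / (a * b) * Im (x * cnj y)"
  unfolding cmod_power2 by (cases "a = 0"; cases "b = 0") (simp_all add: power2_eq_square field_simps)

lemma pps_sd_product_identity:
  fixes A B :: "complex ^ 'n ^ 'n" and psi phi :: "complex ^ 'n" and perp :: "nat \<Rightarrow> complex ^ 'n"
  defines "a \<equiv> pps_sd A psi phi" and "b \<equiv> pps_sd B psi phi"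
  assumes hA: "hermitian_mat A" and hB: "hermitian_mat B"
    and compl: "\<And>u v. (\<Sum>k\<in>K. cinner u (perp k) * cinner (perp k) v) = cinner u v - cinner u phi * cinner phi v"
    and a_nz: "a \<noteq> 0" and b_nz: "b \<noteq> 0" and s_sq: "s\<^sup>2 = 1"
  shows "a * b * (1 - (\<Sum>k\<in>K. (cmod (cinner psi
            ((\<chi> i j. A $ i $ j / of_real a + of_real s * \<i> * B $ i $ j / of_real b) *v perp k)))\<^sup>2) / 2)
       = - s * Im (cinner (A *v psi) (B *v psi) - cinner (A *v psi) phi * cinner phi (B *v psi))"
    (is "a * b * (1 - ?S / 2) = - s * Im ?G")
proof -
  define p where "p = A *v psi"
  define q where "q = B *v psi"
  have "?S = (\<Sum>k\<in>K. (cmod (cinner p (perp k) / of_real a + of_real s * \<i> * cinner q (perp k) / of_real b))\<^sup>2)"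
    by (simp add: cinner_matrix_lincomb_right p_def q_def
        hermitian_mat_cinner_adjoint[OF hA] hermitian_mat_cinner_adjoint[OF hB])
  also have "\<dots> = (\<Sum>k\<in>K. (cmod (cinner p (perp k)))\<^sup>2) / a\<^sup>2 + s\<^sup>2 * (\<Sum>k\<in>K. (cmod (cinner q (perp k)))\<^sup>2) / b\<^sup>2
      + 2 * s / (a * b) * Im (\<Sum>k\<in>K. cinner p (perp k) * cnj (cinner q (perp k)))"
    by (simp add: cmod_add_imag_squared sum.distrib sum_divide_distrib sum_distrib_left Im_sum)
  also have "\<dots> = 2 + 2 * s / (a * b) * Im ?G"
    using a_nz b_nz s_sq
    by (simp add: a_def b_def p_def q_def pps_sd_squared[OF hA compl, symmetric]
        pps_sd_squared[OF hB compl, symmetric] cinner_commute_cnj compl)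
  finally show ?thesis
    using a_nz b_nz by (simp add: field_simps)
qed

theorem theorem2:
  fixes A B :: "complex ^ 'n ^ 'n"
    and psi phi :: "complex ^ 'n"
    and perp :: "nat \<Rightarrow> complex ^ 'n"
    and s :: real
  assumes hA: "hermitian_mat A" and hB: "hermitian_mat B"
    and psi_unit: "cinner psi psi = 1" and phi_unit: "cinner phi phi = 1"
    and perp_unit: "\<forall>k\<in>{1..CARD('n) - 1}. cinner (perp k) (perp k) = 1"
    and perp_phi: "\<forall>k\<in>{1..CARD('n) - 1}. cinner phi (perp k) = 0"
    and perp_orth: "\<forall>j\<in>{1..CARD('n) - 1}. \<forall>k\<in>{1..CARD('n) - 1}. j \<noteq> k \<longrightarrow> cinner (perp j) (perp k) = 0"
    and a_nz: "pps_sd A psi phi \<noteq> 0" and b_nz: "pps_sd B psi phi \<noteq> 0"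
    and s_sign: "s = 1 \<or> s = -1"
  shows "let a = pps_sd A psi phi; b = pps_sd B psi phi;
             T = (\<chi> i j. A $ i $ j / complex_of_real a + complex_of_real s * \<i> * B $ i $ j / complex_of_real b);
             S = (\<Sum>k=1..CARD('n) - 1. (cmod (cinner psi (T *v perp k)))\<^sup>2);
             W = cinner psi (A *v phi) * cinner phi (B *v psi);
             R = - complex_of_real s * (1 / (2 * \<i>) * cinner psi (commutator A B *v psi) - complex_of_real (Im W))
         in complex_of_real (a * b * (1 - S / 2)) = R
            \<and> (1 - S / 2 \<noteq> 0 \<longrightarrow> complex_of_real (a * b) = R / complex_of_real (1 - S / 2))"
proof -
  define a where "a = pps_sd A psi phi"
  define b where "b = pps_sd B psi phi"
  define T where "T = (\<chi> i j. A $ i $ j / complex_of_real a + complex_of_real s * \<i> * B $ i $ j / complex_of_real b)"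
  define S where "S = (\<Sum>k=1..CARD('n) - 1. (cmod (cinner psi (T *v perp k)))\<^sup>2)"
  define W where "W = cinner psi (A *v phi) * cinner phi (B *v psi)"
  define R where "R = - complex_of_real s * (1 / (2 * \<i>) * cinner psi (commutator A B *v psi) - complex_of_real (Im W))"
  have W_eq: "W = cinner (A *v psi) phi * cinner phi (B *v psi)"
    by (simp add: W_def hermitian_mat_cinner_adjoint[OF hA])
  have s_sq: "s\<^sup>2 = 1"
    using s_sign by auto
  have "a * b * (1 - S / 2) = - s * Im (cinner (A *v psi) (B *v psi) - W)"
    unfolding a_def b_def T_def S_def W_eq
    by (rule pps_sd_product_identity[OF hA hB
          cinner_orthogonal_complement_expansion[OF phi_unit perp_unit perp_phi perp_orth] a_nz b_nz s_sq])
  moreover have "R = complex_of_real (- s * Im (cinner (A *v psi) (B *v psi) - W))"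
    by (simp add: R_def cinner_commutator_hermitian[OF hA hB] algebra_simps)
  ultimately have identity: "complex_of_real (a * b * (1 - S / 2)) = R"
    by simp
  then have "1 - S / 2 \<noteq> 0 \<longrightarrow> complex_of_real (a * b) = R / complex_of_real (1 - S / 2)"
    by (metis nonzero_mult_div_cancel_right of_real_eq_0_iff of_real_mult)
  with identity show ?thesis
    unfolding Let_def a_def[symmetric] b_def[symmetric] T_def[symmetric] S_def[symmetric]
      W_def[symmetric] R_def[symmetric]
    by blast
qed

end
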